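(* Let $R$ be a commutative domain over $\mathbb{C}$, $m\ge1$, and $c(t)\in R[t]$. Consider the endomorphisms of $R(z_1,\dots,z_m)$ $$\sum_{r=1}^m\frac{c(z_r)}{\prod_{1\le s\le m,\,s\ne r}(z_r-z_s)}\,\beta_r \qquad\text{and}\qquad \partial_{m-1}\cdots\partial_1\,c(z_1)\,\beta_1 .$$ Applied to any element of $R(z_1,\dots,z_m)^{\Sigma_m}$ these two operators agree. In particular, both preserve $R[z_1,\dots,z_m]^{\Sigma_m}$.
   Context: $R(z_1,\dots,z_m)$ is the field of fractions of $R[z_1,\dots,z_m]$, with $\Sigma_m$ permuting the variables. For $1\le r\le m$, $\beta_r$ is the $R$-algebra endomorphism with $\beta_r(z_s)=z_s+2\delta_{r,s}$. For $1\le r<m$, $\partial_r=\frac{1}{z_{r+1}-z_r}(s_r-1)$, where $s_r$ is the $R$-algebra automorphism swapping $z_r$ and $z_{r+1}$. Polynomials such as $c(z_1)$ act by multiplication; operators are composed right to left. *)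

theory Defs
  imports "HOL-Library.Poly_Mapping" "HOL-Computational_Algebra.Polynomial"
    "HOL-Computational_Algebra.Fraction_Field" "HOL-Combinatorics.Permutations"
    Complex_Main
begin

text \<open>Multivariate polynomials over R in the variables z_0, z_1, z_2, ... ;
  a monomial is a finitely supported exponent vector nat =>0 nat.
  R[z_1,...,z_m] is the subring of polynomials whose variables lie in {1..m}.\<close>
type_synonym 'a mpol = "(nat \<Rightarrow>\<^sub>0 nat) \<Rightarrow>\<^sub>0 'a"

definition mVar :: "nat \<Rightarrow> ('a::comm_ring_1) mpol" where
  "mVar i = Poly_Mapping.single (Poly_Mapping.single i 1) 1"

definition mConst :: "'a::comm_ring_1 \<Rightarrow> 'a mpol" where
  "mConst a = Poly_Mapping.single 0 a"

definition mvars :: "('a::zero) mpol \<Rightarrow> nat set" where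
  "mvars p = (\<Union>mon\<in>Poly_Mapping.keys p. Poly_Mapping.keys mon)"

definition msubst :: "(nat \<Rightarrow> ('a::comm_ring_1) mpol) \<Rightarrow> 'a mpol \<Rightarrow> 'a mpol" where
  "msubst \<sigma> p = (\<Sum>mon\<in>Poly_Mapping.keys p. mConst (Poly_Mapping.lookup p mon) * (\<Prod>i\<in>Poly_Mapping.keys mon. \<sigma> i ^ Poly_Mapping.lookup mon i))"

definition fext :: "('a::idom \<Rightarrow> 'a) \<Rightarrow> 'a fract \<Rightarrow> 'a fract" where
  "fext h x = (SOME y. \<exists>a b. b \<noteq> 0 \<and> x = Fract a b \<and> y = Fract (h a) (h b))"

definition beta :: "nat \<Rightarrow> ('a::idom) mpol fract \<Rightarrow> 'a mpol fract" where
  "beta r = fext (msubst (\<lambda>s. if s = r then mVar s + 2 else mVar s))"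

definition perm_act :: "(nat \<Rightarrow> nat) \<Rightarrow> ('a::idom) mpol fract \<Rightarrow> 'a mpol fract" where
  "perm_act \<sigma> = fext (msubst (\<lambda>i. mVar (\<sigma> i)))"

definition swp :: "nat \<Rightarrow> ('a::idom) mpol fract \<Rightarrow> 'a mpol fract" where
  "swp r = perm_act (Transposition.transpose r (r+1))"

definition pz :: "nat \<Rightarrow> ('a::idom) mpol fract" where
  "pz i = Fract (mVar i) 1"

definition ddiff :: "nat \<Rightarrow> ('a::idom) mpol fract \<Rightarrow> 'a mpol fract" where
  "ddiff r g = (swp r g - g) / (pz (r+1) - pz r)"

definition cz :: "'a::idom poly \<Rightarrow> nat \<Rightarrow> 'a mpol fract" where
  "cz c r = Fract (poly (map_poly mConst c) (mVar r)) 1"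

definition opA :: "nat \<Rightarrow> 'a::idom poly \<Rightarrow> 'a mpol fract \<Rightarrow> 'a mpol fract" where
  "opA m c f = (\<Sum>r=1..m. cz c r / (\<Prod>s\<in>{1..m}-{r}. pz r - pz s) * beta r f)"

text \<open>Second operator: partial_{m-1} ... partial_1 c(z_1) beta_1 (rightmost applied first).\<close>
definition opB :: "nat \<Rightarrow> 'a::idom poly \<Rightarrow> 'a mpol fract \<Rightarrow> 'a mpol fract" where
  "opB m c f = fold ddiff [1..<m] (cz c 1 * beta 1 f)"

text \<open>R(z_1,...,z_m) inside the fraction field of R[z_0,z_1,...].\<close>
definition ratfun :: "nat \<Rightarrow> ('a::idom) mpol fract set" where
  "ratfun m = {Fract p q | p q. q \<noteq> 0 \<and> mvars p \<subseteq> {1..m} \<and> mvars q \<subseteq> {1..m}}"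

definition sym_ratfun :: "nat \<Rightarrow> ('a::idom) mpol fract set" where
  "sym_ratfun m = {f \<in> ratfun m. \<forall>\<sigma>. \<sigma> permutes {1..m} \<longrightarrow> perm_act \<sigma> f = f}"

definition sym_poly :: "nat \<Rightarrow> ('a::idom) mpol fract set" where
  "sym_poly m = {Fract p 1 | p. mvars p \<subseteq> {1..m} \<and>
      (\<forall>\<sigma>. \<sigma> permutes {1..m} \<longrightarrow> msubst (\<lambda>i. mVar (\<sigma> i)) p = p)}"

text \<open>R is a commutative domain over C: an idom with a unital ring homomorphism from C.\<close>
definition complex_alg_hom :: "(complex \<Rightarrow> 'a::idom) \<Rightarrow> bool" where
  "complex_alg_hom \<iota> \<longleftrightarrow> \<iota> 1 = 1 \<and> (\<forall>x y. \<iota> (x + y) = \<iota> x + \<iota> y) \<and> (\<forall>x y. \<iota> (x * y) = \<iota> x * \<iota> y)"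

end

theory Submission
  imports Defs
begin

text \<open>
  Put g r = c(z_r) beta_r f. The first operator is the divided difference of g at the nodes
  z_1, ..., z_m, the sum of g r / prod_{s<>r} (z_r - z_s). When f is symmetric, s_k acts on g by
  permuting indices, so it sends the divided difference over {1..k} to the one over
  {1..k-1, k+1}; by the recursion for divided differences, partial_k therefore turns the
  divided difference over {1..k} into the one over {1..k+1}. Starting from g 1 = c(z_1) beta_1 f,
  the second operator thus equals the first. For f in R[z]^Sigma_m each step stays polynomial,
  as h - s_k h is divisible by z_{k+1} - z_k, and the result is symmetric because the first
  operator visibly is.
\<close>

section \<open>Substitution in multivariate polynomials\<close>

definition mon_eval :: "(nat \<Rightarrow> ('a::comm_ring_1) mpol) \<Rightarrow> (nat \<Rightarrow>\<^sub>0 nat) \<Rightarrow> 'a mpol" where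
  "mon_eval \<sigma> mon = (\<Prod>i\<in>Poly_Mapping.keys mon. \<sigma> i ^ Poly_Mapping.lookup mon i)"

lemma mon_eval_superset:
  assumes "finite S" "Poly_Mapping.keys mon \<subseteq> S"
  shows "mon_eval \<sigma> mon = (\<Prod>i\<in>S. \<sigma> i ^ Poly_Mapping.lookup mon i)"
  unfolding mon_eval_def
  by (rule prod.mono_neutral_left[OF assms]) (auto simp: in_keys_iff)

lemma keys_add_nat:
  "Poly_Mapping.keys (k + l :: nat \<Rightarrow>\<^sub>0 nat) = Poly_Mapping.keys k \<union> Poly_Mapping.keys l"
  by (auto simp: in_keys_iff lookup_add)

lemma mon_eval_add: "mon_eval \<sigma> (k + l) = mon_eval \<sigma> k * mon_eval \<sigma> l"
proof -
  let ?S = "Poly_Mapping.keys k \<union> Poly_Mapping.keys l"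
  have "mon_eval \<sigma> (k + l) = (\<Prod>i\<in>?S. \<sigma> i ^ Poly_Mapping.lookup (k + l) i)"
    by (rule mon_eval_superset) (auto simp: keys_add_nat)
  also have "\<dots> = (\<Prod>i\<in>?S. \<sigma> i ^ Poly_Mapping.lookup k i) * (\<Prod>i\<in>?S. \<sigma> i ^ Poly_Mapping.lookup l i)"
    by (simp add: lookup_add power_add prod.distrib)
  also have "\<dots> = mon_eval \<sigma> k * mon_eval \<sigma> l"
    by (subst (1 2) mon_eval_superset[of ?S]) auto
  finally show ?thesis .
qed

lemma mConst_0 [simp]: "mConst 0 = 0" by (simp add: mConst_def)
lemma mConst_1 [simp]: "mConst 1 = 1" by (simp add: mConst_def)
lemma mConst_add: "mConst (a + b) = mConst a + mConst b" by (simp add: mConst_def single_add)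
lemma mConst_mult: "mConst (a * b) = mConst a * mConst b" by (simp add: mConst_def mult_single)

lemma msubst_superset:
  assumes "finite S" "Poly_Mapping.keys p \<subseteq> S"
  shows "msubst \<sigma> p = (\<Sum>mon\<in>S. mConst (Poly_Mapping.lookup p mon) * mon_eval \<sigma> mon)"
  unfolding msubst_def mon_eval_def[symmetric]
  by (rule sum.mono_neutral_left[OF assms]) (auto simp: in_keys_iff)

lemma msubst_add: "msubst \<sigma> (p + q) = msubst \<sigma> p + msubst \<sigma> q"
proof -
  let ?S = "Poly_Mapping.keys p \<union> Poly_Mapping.keys q"
  let ?sub = "\<lambda>p. \<Sum>mon\<in>?S. mConst (Poly_Mapping.lookup p mon) * mon_eval \<sigma> mon"
  have "msubst \<sigma> (p + q) = ?sub (p + q)"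
    by (rule msubst_superset) (use keys_add[of p q] in auto)
  also have "\<dots> = ?sub p + ?sub q"
    by (simp add: lookup_add mConst_add distrib_right sum.distrib)
  also have "\<dots> = msubst \<sigma> p + msubst \<sigma> q"
    by (subst (1 2) msubst_superset[of ?S]) auto
  finally show ?thesis .
qed

lemma msubst_0 [simp]: "msubst \<sigma> 0 = 0"
  by (simp add: msubst_def)

lemma msubst_sum: "msubst \<sigma> (sum f A) = (\<Sum>x\<in>A. msubst \<sigma> (f x))"
  by (induction A rule: infinite_finite_induct) (auto simp: msubst_add)

lemma msubst_single: "msubst \<sigma> (Poly_Mapping.single k a) = mConst a * mon_eval \<sigma> k"
  by (cases "a = 0") (simp_all add: msubst_def mon_eval_def)

lemma poly_mapping_sum_single:
  "p = (\<Sum>k\<in>Poly_Mapping.keys p. Poly_Mapping.single k (Poly_Mapping.lookup p k))"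
  by (rule poly_mapping_eqI) (auto simp: lookup_sum lookup_single when_def in_keys_iff)

lemma msubst_mult: "msubst \<sigma> (p * q) = msubst \<sigma> p * msubst \<sigma> q"
proof -
  let ?P = "Poly_Mapping.keys p" and ?Q = "Poly_Mapping.keys q"
  have "p * q = (\<Sum>k\<in>?P. Poly_Mapping.single k (Poly_Mapping.lookup p k))
              * (\<Sum>l\<in>?Q. Poly_Mapping.single l (Poly_Mapping.lookup q l))"
    by (subst (1) poly_mapping_sum_single[of p], subst (1) poly_mapping_sum_single[of q])
      (rule refl)
  also have "\<dots> = (\<Sum>k\<in>?P. \<Sum>l\<in>?Q.
      Poly_Mapping.single (k + l) (Poly_Mapping.lookup p k * Poly_Mapping.lookup q l))"
    by (simp add: sum_product mult_single)
  finally have "msubst \<sigma> (p * q) = (\<Sum>k\<in>?P. \<Sum>l\<in>?Q.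
      mConst (Poly_Mapping.lookup p k) * mon_eval \<sigma> k
      * (mConst (Poly_Mapping.lookup q l) * mon_eval \<sigma> l))"
    by (simp add: msubst_sum msubst_single mon_eval_add mConst_mult mult_ac)
  also have "\<dots> = msubst \<sigma> p * msubst \<sigma> q"
    by (simp add: msubst_def mon_eval_def sum_product)
  finally show ?thesis .
qed

lemma msubst_mConst [simp]: "msubst \<sigma> (mConst a) = mConst a"
  by (simp add: mConst_def msubst_single mon_eval_def)

lemma msubst_1 [simp]: "msubst \<sigma> 1 = 1"
  using msubst_mConst[of \<sigma> 1] by simp

lemma msubst_uminus: "msubst \<sigma> (- p) = - msubst \<sigma> p"
  using msubst_add[of \<sigma> p "- p"] by (simp add: eq_neg_iff_add_eq_0 add.commute)

lemma msubst_diff: "msubst \<sigma> (p - q) = msubst \<sigma> p - msubst \<sigma> q"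
  using msubst_add[of \<sigma> p "- q"] by (simp add: msubst_uminus)

lemma msubst_prod: "msubst \<sigma> (prod f A) = (\<Prod>x\<in>A. msubst \<sigma> (f x))"
  by (induction A rule: infinite_finite_induct) (auto simp: msubst_mult)

lemma msubst_power: "msubst \<sigma> (p ^ n) = msubst \<sigma> p ^ n"
  by (induction n) (auto simp: msubst_mult)

lemma msubst_numeral [simp]: "msubst \<sigma> (numeral n) = numeral n"
  by (metis mConst_def msubst_mConst single_numeral)

lemma msubst_mVar [simp]: "msubst \<sigma> (mVar i) = \<sigma> i"
  by (simp add: mVar_def msubst_single mon_eval_def)

lemma msubst_poly:
  "msubst \<sigma> (poly (map_poly mConst c) x) = poly (map_poly mConst c) (msubst \<sigma> x)"
  by (induction c) (simp_all add: map_poly_pCons msubst_add msubst_mult)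

lemma msubst_msubst: "msubst \<sigma> (msubst \<tau> p) = msubst (\<lambda>i. msubst \<sigma> (\<tau> i)) p"
  unfolding msubst_def[of \<tau>]
  by (simp add: msubst_sum msubst_mult msubst_prod msubst_power
      msubst_def[of "\<lambda>i. msubst \<sigma> (\<tau> i)"])

lemma mVar_power: "mVar i ^ n = Poly_Mapping.single (Poly_Mapping.single i n) 1"
  by (induction n) (auto simp: mVar_def mult_single single_add[symmetric])

lemma prod_single_1:
  "(\<Prod>i\<in>A. Poly_Mapping.single (f i) (1::'a::comm_ring_1)) = Poly_Mapping.single (\<Sum>i\<in>A. f i) 1"
  by (induction A rule: infinite_finite_induct) (auto simp: mult_single)

lemma mon_eval_mVar: "mon_eval mVar mon = Poly_Mapping.single mon 1"
proof -
  have "mon_eval mVar mon = (\<Prod>i\<in>Poly_Mapping.keys mon.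
      Poly_Mapping.single (Poly_Mapping.single i (Poly_Mapping.lookup mon i)) 1)"
    by (simp add: mon_eval_def mVar_power)
  also have "\<dots> = Poly_Mapping.single mon 1"
    by (subst (2) poly_mapping_sum_single) (rule prod_single_1)
  finally show ?thesis .
qed

lemma msubst_mVar_id [simp]: "msubst mVar p = p"
  unfolding msubst_def mon_eval_def[symmetric] mon_eval_mVar
  by (simp add: mConst_def mult_single flip: poly_mapping_sum_single)

lemma mVar_eq_iff: "mVar i = (mVar j :: ('a::comm_ring_1) mpol) \<longleftrightarrow> i = j"
  by (metis mVar_def lookup_single_eq lookup_single_not_eq one_neq_zero)

section \<open>Extension of substitutions to the fraction field\<close>

definition invertible_subst :: "(nat \<Rightarrow> ('a::comm_ring_1) mpol) \<Rightarrow> bool" where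
  "invertible_subst \<sigma> \<longleftrightarrow> (\<exists>\<sigma>'. \<forall>i. msubst \<sigma>' (\<sigma> i) = mVar i)"

lemma invertible_subst_inj:
  assumes "invertible_subst \<sigma>" "msubst \<sigma> p = msubst \<sigma> q"
  shows "p = q"
proof -
  obtain \<sigma>' where "\<And>i. msubst \<sigma>' (\<sigma> i) = mVar i"
    using assms(1) by (auto simp: invertible_subst_def)
  then have "msubst \<sigma>' (msubst \<sigma> x) = x" for x
    by (simp add: msubst_msubst)
  from this[of p] this[of q] assms(2) show ?thesis by metis
qed

lemma invertible_subst_nonzero:
  "invertible_subst \<sigma> \<Longrightarrow> b \<noteq> 0 \<Longrightarrow> msubst \<sigma> b \<noteq> 0"
  using invertible_subst_inj[of \<sigma> b 0] by auto

lemma invertible_subst_compose: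
  assumes "invertible_subst \<sigma>" "invertible_subst \<tau>"
  shows "invertible_subst (\<lambda>i. msubst \<sigma> (\<tau> i))"
proof -
  obtain \<sigma>' where \<sigma>': "\<And>i. msubst \<sigma>' (\<sigma> i) = mVar i"
    using assms(1) by (auto simp: invertible_subst_def)
  obtain \<tau>' where \<tau>': "\<And>i. msubst \<tau>' (\<tau> i) = mVar i"
    using assms(2) by (auto simp: invertible_subst_def)
  have "msubst (\<lambda>i. msubst \<tau>' (\<sigma>' i)) (msubst \<sigma> (\<tau> i)) = mVar i" for i
    by (simp add: msubst_msubst \<sigma>' flip: msubst_msubst[of \<tau>'] ) (simp add: \<tau>')
  then show ?thesis
    unfolding invertible_subst_def by blast
qed

text \<open>fext chooses a representative with SOME; the result only becomes independent of that
  choice when msubst sigma is injective, which invertible substitutions guarantee.\<close>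

definition fract_subst :: "(nat \<Rightarrow> ('a::idom) mpol) \<Rightarrow> 'a mpol fract \<Rightarrow> 'a mpol fract" where
  "fract_subst \<sigma> = fext (msubst \<sigma>)"

lemma fract_subst_Fract:
  assumes \<sigma>: "invertible_subst \<sigma>" and b: "b \<noteq> 0"
  shows "fract_subst \<sigma> (Fract a b) = Fract (msubst \<sigma> a) (msubst \<sigma> b)"
proof -
  let ?P = "\<lambda>y. \<exists>a' b'. b' \<noteq> 0 \<and> Fract a b = Fract a' b' \<and> y = Fract (msubst \<sigma> a') (msubst \<sigma> b')"
  have "?P (SOME y. ?P y)"
    by (rule someI_ex) (use b in blast)
  then obtain a' b' where b': "b' \<noteq> 0" and eq: "Fract a b = Fract a' b'"
      and some: "(SOME y. ?P y) = Fract (msubst \<sigma> a') (msubst \<sigma> b')"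
    by blast
  from eq b b' have "a * b' = a' * b"
    by (simp add: eq_fract)
  then have "msubst \<sigma> a * msubst \<sigma> b' = msubst \<sigma> a' * msubst \<sigma> b"
    by (metis msubst_mult)
  then have "Fract (msubst \<sigma> a') (msubst \<sigma> b') = Fract (msubst \<sigma> a) (msubst \<sigma> b)"
    using invertible_subst_nonzero[OF \<sigma>] b b' by (simp add: eq_fract)
  then show ?thesis
    unfolding fract_subst_def fext_def using some by simp
qed

lemma fract_subst_add:
  "invertible_subst \<sigma> \<Longrightarrow> fract_subst \<sigma> (x + y) = fract_subst \<sigma> x + fract_subst \<sigma> y"
  by (cases x, cases y)
    (simp add: fract_subst_Fract invertible_subst_nonzero msubst_add msubst_mult)

lemma fract_subst_mult:
  "invertible_subst \<sigma> \<Longrightarrow> fract_subst \<sigma> (x * y) = fract_subst \<sigma> x * fract_subst \<sigma> y"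
  by (cases x, cases y) (simp add: fract_subst_Fract invertible_subst_nonzero msubst_mult)

lemma fract_subst_diff:
  "invertible_subst \<sigma> \<Longrightarrow> fract_subst \<sigma> (x - y) = fract_subst \<sigma> x - fract_subst \<sigma> y"
  by (cases x, cases y)
    (simp add: fract_subst_Fract invertible_subst_nonzero msubst_diff msubst_mult)

lemma fract_subst_0: "invertible_subst \<sigma> \<Longrightarrow> fract_subst \<sigma> 0 = 0"
  by (simp add: Zero_fract_def fract_subst_Fract)

lemma fract_subst_1: "invertible_subst \<sigma> \<Longrightarrow> fract_subst \<sigma> 1 = 1"
  by (simp add: One_fract_def fract_subst_Fract)

lemma fract_subst_inverse:
  assumes "invertible_subst \<sigma>"
  shows "fract_subst \<sigma> (inverse x) = inverse (fract_subst \<sigma> x)"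
proof (cases x)
  case (Fract a b)
  show ?thesis
  proof (cases "a = 0")
    case True
    then have "x = 0"
      using Fract by (simp add: Zero_fract_def eq_fract)
    then show ?thesis
      using assms by (simp add: fract_subst_0)
  qed (use Fract assms in \<open>simp add: fract_subst_Fract invertible_subst_nonzero\<close>)
qed

lemma fract_subst_divide:
  "invertible_subst \<sigma> \<Longrightarrow> fract_subst \<sigma> (x / y) = fract_subst \<sigma> x / fract_subst \<sigma> y"
  by (simp add: divide_inverse fract_subst_mult fract_subst_inverse)

lemma fract_subst_sum: "invertible_subst \<sigma> \<Longrightarrow> fract_subst \<sigma> (sum f A) = (\<Sum>x\<in>A. fract_subst \<sigma> (f x))"
  by (induction A rule: infinite_finite_induct) (auto simp: fract_subst_add fract_subst_0)

lemma fract_subst_prod: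
  "invertible_subst \<sigma> \<Longrightarrow> fract_subst \<sigma> (prod f A) = (\<Prod>x\<in>A. fract_subst \<sigma> (f x))"
  by (induction A rule: infinite_finite_induct) (auto simp: fract_subst_mult fract_subst_1)

lemma fract_subst_compose:
  "invertible_subst \<sigma> \<Longrightarrow> invertible_subst \<tau> \<Longrightarrow>
    fract_subst \<sigma> (fract_subst \<tau> x) = fract_subst (\<lambda>i. msubst \<sigma> (\<tau> i)) x"
  by (cases x)
    (simp add: fract_subst_Fract invertible_subst_nonzero invertible_subst_compose msubst_msubst)

lemma fract_subst_pz: "invertible_subst \<sigma> \<Longrightarrow> fract_subst \<sigma> (pz i) = Fract (\<sigma> i) 1"
  by (simp add: pz_def fract_subst_Fract)

lemma fract_subst_cz:
  "invertible_subst \<sigma> \<Longrightarrow> fract_subst \<sigma> (cz c i) = Fract (poly (map_poly mConst c) (\<sigma> i)) 1"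
  by (simp add: cz_def fract_subst_Fract msubst_poly)

section \<open>Shifts and permutations of the variables\<close>

definition shift_subst :: "nat \<Rightarrow> nat \<Rightarrow> ('a::comm_ring_1) mpol" where
  "shift_subst r s = (if s = r then mVar s + 2 else mVar s)"

definition perm_subst :: "(nat \<Rightarrow> nat) \<Rightarrow> nat \<Rightarrow> ('a::comm_ring_1) mpol" where
  "perm_subst \<pi> i = mVar (\<pi> i)"

lemma invertible_shift_subst: "invertible_subst (shift_subst r)"
  unfolding invertible_subst_def
  by (rule exI[of _ "\<lambda>s. if s = r then mVar s - 2 else mVar s"])
    (simp add: shift_subst_def msubst_add)

lemma invertible_perm_subst: "bij \<pi> \<Longrightarrow> invertible_subst (perm_subst \<pi>)"
  unfolding invertible_subst_def
  by (rule exI[of _ "perm_subst (inv \<pi>)"]) (simp add: perm_subst_def bij_is_inj)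

lemma beta_eq_fract_subst: "beta r = fract_subst (shift_subst r)"
  by (simp add: beta_def fract_subst_def shift_subst_def[abs_def])

lemma perm_act_eq_fract_subst: "perm_act \<pi> = fract_subst (perm_subst \<pi>)"
  by (simp add: perm_act_def fract_subst_def perm_subst_def[abs_def])

lemma perm_act_beta:
  assumes "bij \<pi>"
  shows "perm_act \<pi> (beta r x) = beta (\<pi> r) (perm_act \<pi> x)"
proof -
  have commute: "(\<lambda>i. msubst (perm_subst \<pi>) (shift_subst r i))
      = (\<lambda>i. msubst (shift_subst (\<pi> r)) (perm_subst \<pi> i))"
    using bij_is_inj[OF assms]
    by (auto simp: fun_eq_iff shift_subst_def perm_subst_def msubst_add inj_eq)
  show ?thesis
    by (simp only: beta_eq_fract_subst perm_act_eq_fract_subst commute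
        fract_subst_compose[OF invertible_perm_subst[OF assms] invertible_shift_subst]
        fract_subst_compose[OF invertible_shift_subst invertible_perm_subst[OF assms]])
qed

lemma perm_act_pz: "bij \<pi> \<Longrightarrow> perm_act \<pi> (pz i) = pz (\<pi> i)"
  by (simp add: perm_act_eq_fract_subst fract_subst_pz invertible_perm_subst)
    (simp add: perm_subst_def pz_def)

lemma perm_act_cz: "bij \<pi> \<Longrightarrow> perm_act \<pi> (cz c i) = cz c (\<pi> i)"
  by (simp add: perm_act_eq_fract_subst fract_subst_cz invertible_perm_subst)
    (simp add: perm_subst_def cz_def)

lemma perm_act_mult: "bij \<pi> \<Longrightarrow> perm_act \<pi> (x * y) = perm_act \<pi> x * perm_act \<pi> y"
  by (simp add: perm_act_eq_fract_subst fract_subst_mult invertible_perm_subst)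

lemma perm_act_Fract_1:
  "bij \<pi> \<Longrightarrow> perm_act \<pi> (Fract p 1) = Fract (msubst (\<lambda>i. mVar (\<pi> i)) p) 1"
  by (simp add: perm_act_eq_fract_subst fract_subst_Fract invertible_perm_subst)
    (simp add: perm_subst_def[abs_def])

lemma beta_Fract_1: "beta r (Fract p 1) = Fract (msubst (shift_subst r) p) 1"
  by (simp add: beta_eq_fract_subst fract_subst_Fract invertible_shift_subst)

lemma pz_eq_iff: "pz i = (pz j :: ('a::idom) mpol fract) \<longleftrightarrow> i = j"
  by (simp add: pz_def eq_fract mVar_eq_iff)

section \<open>Divided differences\<close>

definition divided_difference :: "('i \<Rightarrow> 'b::field) \<Rightarrow> ('i \<Rightarrow> 'b) \<Rightarrow> 'i set \<Rightarrow> 'b" where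
  "divided_difference x g I = (\<Sum>r\<in>I. g r / (\<Prod>s\<in>I - {r}. x r - x s))"

lemma divided_difference_insert:
  assumes "finite A" "a \<notin> A"
  shows "divided_difference x g (insert a A)
    = g a / (\<Prod>s\<in>A. x a - x s) + (\<Sum>r\<in>A. g r / ((\<Prod>s\<in>A - {r}. x r - x s) * (x r - x a)))"
  using assms by (auto simp: divided_difference_def insert_Diff_if mult.commute intro!: sum.cong)

lemma divided_difference_insert_insert:
  assumes A: "finite A" "a \<notin> A" "b \<notin> A" and "a \<noteq> b"
    and inj: "inj_on x (insert a (insert b A))"
  shows "(divided_difference x g (insert b A) - divided_difference x g (insert a A)) / (x b - x a)
    = divided_difference x g (insert b (insert a A))"
proof -
  define W where "W r = (\<Prod>s\<in>A - {r}. x r - x s)" for r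
  have x_neq: "x r - x s \<noteq> 0"
    if "r \<in> insert a (insert b A)" "s \<in> insert a (insert b A)" "r \<noteq> s" for r s
    using inj_onD[OF inj _ that(1,2)] that(3) by auto
  have W_nonzero: "W r \<noteq> 0" if "r \<in> insert a (insert b A)" for r
    unfolding W_def using A(1) x_neq[OF that] by (auto simp: prod_zero_iff)
  have ba: "x b - x a \<noteq> 0"
    using x_neq[of b a] \<open>a \<noteq> b\<close> by auto
  have summand: "(g r / (W r * (x r - x b)) - g r / (W r * (x r - x a))) / (x b - x a)
      = g r / (W r * (x r - x a) * (x r - x b))" if "r \<in> A" for r
  proof -
    have "x r - x a \<noteq> 0" "x r - x b \<noteq> 0" "W r \<noteq> 0"
      using x_neq[of r a] x_neq[of r b] W_nonzero[of r] that A by auto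
    then show ?thesis
      using ba by (simp add: divide_simps) (simp add: algebra_simps)
  qed
  have ends: "(g b / W b - g a / W a) / (x b - x a)
      = g b / (W b * (x b - x a)) + g a / (W a * (x a - x b))"
  proof -
    have "x a - x b \<noteq> 0"
      using ba by simp
    then show ?thesis
      using ba W_nonzero[of a] W_nonzero[of b] by (simp add: divide_simps) (simp add: algebra_simps)
  qed
  have "divided_difference x g (insert b (insert a A))
      = g b / (W b * (x b - x a)) + (g a / (W a * (x a - x b))
        + (\<Sum>r\<in>A. g r / (W r * (x r - x a) * (x r - x b))))"
    using A \<open>a \<noteq> b\<close>
    by (auto simp: divided_difference_insert W_def insert_Diff_if mult_ac intro!: sum.cong)
  also have "\<dots> = (g b / W b - g a / W a) / (x b - x a)
      + (\<Sum>r\<in>A. (g r / (W r * (x r - x b)) - g r / (W r * (x r - x a))) / (x b - x a))"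
    by (simp add: ends summand)
  also have "\<dots> = ((g b / W b + (\<Sum>r\<in>A. g r / (W r * (x r - x b))))
      - (g a / W a + (\<Sum>r\<in>A. g r / (W r * (x r - x a))))) / (x b - x a)"
    by (simp add: sum_subtractf sum_divide_distrib[symmetric] add_divide_distrib[symmetric]
        algebra_simps)
  also have "\<dots> = (divided_difference x g (insert b A) - divided_difference x g (insert a A))
      / (x b - x a)"
    using A by (simp add: divided_difference_insert W_def)
  finally show ?thesis ..
qed

lemma divided_difference_reindex:
  assumes "inj_on h I"
  shows "divided_difference x g (h ` I) = divided_difference (x \<circ> h) (g \<circ> h) I"
proof -
  have "(\<Prod>s\<in>h ` I - {h r}. x (h r) - x s) = (\<Prod>s\<in>I - {r}. x (h r) - x (h s))" if "r \<in> I" for r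
  proof -
    have "h ` I - {h r} = h ` (I - {r})"
      using assms that by (auto simp: inj_on_eq_iff)
    then show ?thesis
      using assms by (simp add: prod.reindex inj_on_diff)
  qed
  then show ?thesis
    using assms by (simp add: divided_difference_def sum.reindex)
qed

lemma fract_subst_divided_difference:
  "invertible_subst \<sigma> \<Longrightarrow>
    fract_subst \<sigma> (divided_difference x g I)
    = divided_difference (fract_subst \<sigma> \<circ> x) (fract_subst \<sigma> \<circ> g) I"
  by (simp add: divided_difference_def fract_subst_sum fract_subst_divide fract_subst_prod
      fract_subst_diff)

section \<open>Polynomials in a given set of variables\<close>

definition vars_in :: "nat set \<Rightarrow> ('a::comm_ring_1) mpol \<Rightarrow> bool" where
  "vars_in A p \<longleftrightarrow> mvars p \<subseteq> A"

lemma vars_in_add: "vars_in A p \<Longrightarrow> vars_in A q \<Longrightarrow> vars_in A (p + q)"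
  unfolding vars_in_def mvars_def using keys_add[of p q] by blast

lemma vars_in_uminus: "vars_in A p \<Longrightarrow> vars_in A (- p)"
  unfolding vars_in_def mvars_def by (simp add: in_keys_iff)

lemma vars_in_mult:
  assumes "vars_in A p" "vars_in A q"
  shows "vars_in A (p * q)"
proof -
  have "Poly_Mapping.keys mon \<subseteq> A" if mon: "mon \<in> Poly_Mapping.keys (p * q)" for mon
  proof -
    obtain k l where "mon = k + l" "k \<in> Poly_Mapping.keys p" "l \<in> Poly_Mapping.keys q"
      using keys_mult[of p q] mon by blast
    then show ?thesis
      using assms unfolding vars_in_def mvars_def by (auto simp: keys_add_nat)
  qed
  then show ?thesis
    unfolding vars_in_def mvars_def by blast
qed

lemma vars_in_mConst: "vars_in A (mConst a)"
  by (simp add: vars_in_def mvars_def mConst_def)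

lemma vars_in_0: "vars_in A 0"
  using vars_in_mConst[of A 0] by simp

lemma vars_in_1: "vars_in A 1"
  using vars_in_mConst[of A 1] by simp

lemma vars_in_numeral: "vars_in A (numeral n)"
  using vars_in_mConst[of A "numeral n"] by (simp add: mConst_def single_numeral)

lemma vars_in_mVar: "i \<in> A \<Longrightarrow> vars_in A (mVar i)"
  by (simp add: vars_in_def mvars_def mVar_def)

lemma vars_in_sum: "(\<And>x. x \<in> S \<Longrightarrow> vars_in A (f x)) \<Longrightarrow> vars_in A (sum f S)"
  by (induction S rule: infinite_finite_induct) (auto simp: vars_in_0 vars_in_add)

lemma vars_in_prod: "(\<And>x. x \<in> S \<Longrightarrow> vars_in A (f x)) \<Longrightarrow> vars_in A (prod f S)"
  by (induction S rule: infinite_finite_induct) (auto simp: vars_in_1 vars_in_mult)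

lemma vars_in_power: "vars_in A p \<Longrightarrow> vars_in A (p ^ n)"
  by (induction n) (auto simp: vars_in_1 vars_in_mult)

lemma vars_in_monomial:
  "vars_in A p \<Longrightarrow> mon \<in> Poly_Mapping.keys p \<Longrightarrow> Poly_Mapping.keys mon \<subseteq> A"
  unfolding vars_in_def mvars_def by blast

lemma vars_in_msubst:
  assumes "vars_in A p" "\<And>i. i \<in> A \<Longrightarrow> vars_in B (\<sigma> i)"
  shows "vars_in B (msubst \<sigma> p)"
  unfolding msubst_def
  by (intro vars_in_sum vars_in_mult vars_in_mConst vars_in_prod vars_in_power assms(2))
     (use vars_in_monomial[OF assms(1)] in blast)

lemma vars_in_poly: "vars_in A x \<Longrightarrow> vars_in A (poly (map_poly mConst c) x)"
  by (induction c) (simp_all add: map_poly_pCons vars_in_add vars_in_mult vars_in_mConst vars_in_0)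

definition cong_mod_in :: "nat set \<Rightarrow> ('a::comm_ring_1) mpol \<Rightarrow> 'a mpol \<Rightarrow> 'a mpol \<Rightarrow> bool" where
  "cong_mod_in A d p q \<longleftrightarrow> vars_in A p \<and> vars_in A q \<and> (\<exists>t. vars_in A t \<and> p - q = d * t)"

lemma cong_mod_in_refl: "vars_in A p \<Longrightarrow> cong_mod_in A d p p"
  unfolding cong_mod_in_def by (auto intro!: exI[of _ 0] vars_in_0)

lemma cong_mod_in_add:
  assumes "cong_mod_in A d p1 q1" "cong_mod_in A d p2 q2"
  shows "cong_mod_in A d (p1 + p2) (q1 + q2)"
proof -
  obtain t1 t2 where t: "vars_in A t1" "p1 - q1 = d * t1" "vars_in A t2" "p2 - q2 = d * t2"
    using assms by (auto simp: cong_mod_in_def)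
  then have "p1 + p2 - (q1 + q2) = d * (t1 + t2)"
    by (simp add: algebra_simps)
  moreover have "vars_in A p1" "vars_in A q1" "vars_in A p2" "vars_in A q2"
    using assms by (simp_all add: cong_mod_in_def)
  ultimately show ?thesis
    using t unfolding cong_mod_in_def by (metis vars_in_add)
qed

lemma cong_mod_in_mult:
  assumes "cong_mod_in A d p1 q1" "cong_mod_in A d p2 q2"
  shows "cong_mod_in A d (p1 * p2) (q1 * q2)"
proof -
  obtain t1 t2 where t: "vars_in A t1" "p1 - q1 = d * t1" "vars_in A t2" "p2 - q2 = d * t2"
    using assms by (auto simp: cong_mod_in_def)
  have "p1 * p2 - q1 * q2 = p1 * (p2 - q2) + (p1 - q1) * q2"
    by (simp add: algebra_simps)
  then have "p1 * p2 - q1 * q2 = d * (p1 * t2 + t1 * q2)"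
    using t by (simp add: algebra_simps)
  moreover have "vars_in A p1" "vars_in A q1" "vars_in A p2" "vars_in A q2"
    using assms by (simp_all add: cong_mod_in_def)
  ultimately show ?thesis
    using t unfolding cong_mod_in_def by (metis vars_in_add vars_in_mult)
qed

lemma cong_mod_in_sum:
  "(\<And>x. x \<in> S \<Longrightarrow> cong_mod_in A d (f x) (g x)) \<Longrightarrow> cong_mod_in A d (sum f S) (sum g S)"
  by (induction S rule: infinite_finite_induct)
    (auto simp: cong_mod_in_refl vars_in_0 cong_mod_in_add)

lemma cong_mod_in_prod:
  "(\<And>x. x \<in> S \<Longrightarrow> cong_mod_in A d (f x) (g x)) \<Longrightarrow> cong_mod_in A d (prod f S) (prod g S)"
  by (induction S rule: infinite_finite_induct)
    (auto simp: cong_mod_in_refl vars_in_1 cong_mod_in_mult)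

lemma cong_mod_in_power: "cong_mod_in A d p q \<Longrightarrow> cong_mod_in A d (p ^ n) (q ^ n)"
  by (induction n) (auto simp: cong_mod_in_refl vars_in_1 cong_mod_in_mult)

lemma cong_mod_in_msubst:
  assumes "vars_in A p" "\<And>i. i \<in> A \<Longrightarrow> cong_mod_in A d (\<sigma> i) (mVar i)"
  shows "cong_mod_in A d (msubst \<sigma> p) p"
proof -
  have "cong_mod_in A d (msubst \<sigma> p) (msubst mVar p)"
    unfolding msubst_def
    by (intro cong_mod_in_sum cong_mod_in_mult cong_mod_in_refl vars_in_mConst cong_mod_in_prod
        cong_mod_in_power assms(2))
       (use vars_in_monomial[OF assms(1)] in blast)
  then show ?thesis
    by simp
qed

definition poly_fract :: "nat set \<Rightarrow> ('a::idom) mpol fract \<Rightarrow> bool" where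
  "poly_fract A g \<longleftrightarrow> (\<exists>q. g = Fract q 1 \<and> vars_in A q)"

lemma cong_mod_in_transpose:
  fixes p :: "'a::comm_ring_1 mpol"
  assumes p: "vars_in A p" and "k \<in> A" "k + 1 \<in> A"
  defines "\<tau> \<equiv> Transposition.transpose k (k + 1)"
  shows "cong_mod_in A (mVar (k + 1) - mVar k) (msubst (\<lambda>i. mVar (\<tau> i)) p) p"
proof (rule cong_mod_in_msubst[OF p])
  fix i
  assume i: "i \<in> A"
  let ?d = "mVar (k + 1) - mVar k :: 'a mpol"
  have "\<tau> i \<in> A"
    using i assms(2,3) by (auto simp: \<tau>_def transpose_def)
  then have vars: "vars_in A (mVar (\<tau> i))" "vars_in A (mVar i)"
    using i by (simp_all add: vars_in_mVar)
  consider "i = k" | "i = k + 1" | "i \<noteq> k" "i \<noteq> k + 1"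
    by blast
  then have "\<exists>t. vars_in A t \<and> mVar (\<tau> i) - mVar i = ?d * t"
  proof cases
    case 1
    then show ?thesis
      by (intro exI[of _ 1]) (simp add: \<tau>_def vars_in_1)
  next
    case 2
    then show ?thesis
      by (intro exI[of _ "- 1"]) (simp add: \<tau>_def vars_in_uminus vars_in_1)
  next
    case 3
    then show ?thesis
      by (intro exI[of _ 0]) (simp add: \<tau>_def vars_in_0)
  qed
  then show "cong_mod_in A ?d (mVar (\<tau> i)) (mVar i)"
    using vars by (simp add: cong_mod_in_def)
qed

lemma poly_fract_ddiff:
  assumes "poly_fract A g" "k \<in> A" "k + 1 \<in> A"
  shows "poly_fract A (ddiff k g)"
proof -
  obtain p where g: "g = Fract p 1" and p: "vars_in A p"
    using assms(1) by (auto simp: poly_fract_def)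
  define \<tau> where "\<tau> = Transposition.transpose k (k + 1)"
  define d :: "'a mpol" where "d = mVar (k + 1) - mVar k"
  obtain t where t: "vars_in A t" and e: "msubst (\<lambda>i. mVar (\<tau> i)) p - p = d * t"
    using cong_mod_in_transpose[OF p assms(2,3)] by (auto simp: cong_mod_in_def \<tau>_def d_def)
  have "d \<noteq> 0"
    by (simp add: d_def mVar_eq_iff)
  have "ddiff k g = Fract (msubst (\<lambda>i. mVar (\<tau> i)) p - p) 1 / Fract d 1"
    by (simp add: ddiff_def swp_def g perm_act_Fract_1 \<tau>_def pz_def d_def)
  also have "\<dots> = Fract t 1"
    using \<open>d \<noteq> 0\<close> by (simp add: e eq_fract)
  finally show ?thesis
    using t by (auto simp: poly_fract_def)
qed

section \<open>The two operators on symmetric functions\<close>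

lemma opA_eq_divided_difference:
  "opA m c f = divided_difference pz (\<lambda>r. cz c r * beta r f) {1..m}"
  by (simp add: opA_def divided_difference_def)

lemma perm_act_divided_difference:
  assumes "bij \<pi>" "perm_act \<pi> f = f"
  shows "perm_act \<pi> (divided_difference pz (\<lambda>r. cz c r * beta r f) I)
    = divided_difference pz (\<lambda>r. cz c r * beta r f) (\<pi> ` I)"
proof -
  let ?g = "\<lambda>r. cz c r * beta r f"
  have "perm_act \<pi> (divided_difference pz ?g I)
      = divided_difference (perm_act \<pi> \<circ> pz) (perm_act \<pi> \<circ> ?g) I"
    using assms(1)
    by (simp add: perm_act_eq_fract_subst fract_subst_divided_difference invertible_perm_subst)
  also have "\<dots> = divided_difference (pz \<circ> \<pi>) (?g \<circ> \<pi>) I"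
    using assms by (simp add: comp_def perm_act_pz perm_act_mult perm_act_cz perm_act_beta)
  also have "\<dots> = divided_difference pz ?g (\<pi> ` I)"
    by (rule divided_difference_reindex[OF inj_on_subset[OF bij_is_inj[OF assms(1)] subset_UNIV],
          symmetric])
  finally show ?thesis .
qed

lemma perm_act_opA:
  assumes "\<And>\<pi>. \<pi> permutes {1..m} \<Longrightarrow> perm_act \<pi> f = f" "\<pi> permutes {1..m}"
  shows "perm_act \<pi> (opA m c f) = opA m c f"
  unfolding opA_eq_divided_difference
  using perm_act_divided_difference[OF permutes_bij[OF assms(2)] assms(1)[OF assms(2)]]
    permutes_image[OF assms(2)]
  by metis

lemma fold_ddiff_eq_divided_difference:
  assumes sym: "\<And>\<pi>. \<pi> permutes {1..m} \<Longrightarrow> perm_act \<pi> f = f" and "1 \<le> k" "k \<le> m"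
  shows "fold ddiff [1..<k] (cz c 1 * beta 1 f)
    = divided_difference pz (\<lambda>r. cz c r * beta r f) {1..k}"
  using assms(2,3)
proof (induction k rule: dec_induct)
  case base
  then show ?case
    by (simp add: divided_difference_def)
next
  case (step n)
  let ?D = "divided_difference pz (\<lambda>r. cz c r * beta r f)"
  define \<tau> where "\<tau> = Transposition.transpose n (n + 1)"
  have \<tau>: "\<tau> permutes {1..m}"
    unfolding \<tau>_def using step by (intro permutes_swap_id) auto
  have Icc: "{1..n} = insert n {1..<n}"
    using step.hyps(1) by auto
  have "\<tau> ` {1..<n} = {1..<n}"
    by (rule image_cong[where g = id, simplified]) (auto simp: \<tau>_def)
  then have \<tau>_Icc: "\<tau> ` {1..n} = insert (n + 1) {1..<n}"
    unfolding Icc by (simp add: \<tau>_def)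
  have "fold ddiff [1..<Suc n] (cz c 1 * beta 1 f) = ddiff n (?D {1..n})"
    using step by simp
  also have "\<dots> = (?D (\<tau> ` {1..n}) - ?D {1..n}) / (pz (n + 1) - pz n)"
    using perm_act_divided_difference[OF permutes_bij[OF \<tau>] sym[OF \<tau>]]
    by (simp add: ddiff_def swp_def \<tau>_def)
  also have "\<dots> = (?D (insert (n + 1) {1..<n}) - ?D (insert n {1..<n})) / (pz (n + 1) - pz n)"
    by (simp only: \<tau>_Icc flip: Icc)
  also have "\<dots> = ?D (insert (n + 1) (insert n {1..<n}))"
    by (rule divided_difference_insert_insert) (auto simp: inj_on_def pz_eq_iff)
  also have "insert (n + 1) (insert n {1..<n}) = {1..Suc n}"
    using step.hyps(1) by auto
  finally show ?case .
qed

lemma poly_fract_cz_beta: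
  assumes "poly_fract A f" "r \<in> A"
  shows "poly_fract A (cz c r * beta r f)"
proof -
  obtain p where f: "f = Fract p 1" and p: "vars_in A p"
    using assms(1) by (auto simp: poly_fract_def)
  have "vars_in A (shift_subst r i :: 'a mpol)" if "i \<in> A" for i
    using that by (auto simp: shift_subst_def intro!: vars_in_add vars_in_mVar vars_in_numeral)
  then have "vars_in A (poly (map_poly mConst c) (mVar r) * msubst (shift_subst r) p)"
    using assms(2) by (intro vars_in_mult vars_in_poly vars_in_mVar vars_in_msubst[OF p])
  then show ?thesis
    by (auto simp: poly_fract_def cz_def f beta_Fract_1)
qed

lemma poly_fract_fold_ddiff:
  "poly_fract A g \<Longrightarrow> (\<And>k. k \<in> set ks \<Longrightarrow> k \<in> A \<and> k + 1 \<in> A) \<Longrightarrow>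
    poly_fract A (fold ddiff ks g)"
  by (induction ks arbitrary: g) (simp_all add: poly_fract_ddiff)

lemma sym_poly_poly_fract: "f \<in> sym_poly m \<Longrightarrow> poly_fract {1..m} f"
  by (auto simp: sym_poly_def poly_fract_def vars_in_def)

lemma sym_poly_perm_act:
  assumes "f \<in> sym_poly m" "\<pi> permutes {1..m}"
  shows "perm_act \<pi> f = f"
  using assms by (auto simp: sym_poly_def perm_act_Fract_1 permutes_bij)

lemma sym_poly_if_perm_act:
  assumes "poly_fract {1..m} g" "\<And>\<pi>. \<pi> permutes {1..m} \<Longrightarrow> perm_act \<pi> g = g"
  shows "g \<in> sym_poly m"
proof -
  obtain q where g: "g = Fract q 1" and q: "vars_in {1..m} q"
    using assms(1) by (auto simp: poly_fract_def)
  have "msubst (\<lambda>i. mVar (\<pi> i)) q = q" if "\<pi> permutes {1..m}" for \<pi>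
    using assms(2)[OF that] that by (simp add: g perm_act_Fract_1 permutes_bij eq_fract)
  then show ?thesis
    using q by (auto simp: sym_poly_def vars_in_def g)
qed

lemma opA_eq_opB:
  assumes "\<And>\<pi>. \<pi> permutes {1..m} \<Longrightarrow> perm_act \<pi> f = f" "1 \<le> m"
  shows "opA m c f = opB m c f"
  using fold_ddiff_eq_divided_difference[OF assms order.refl]
  by (simp add: opA_eq_divided_difference opB_def)

lemma opB_in_sym_poly:
  assumes f: "f \<in> sym_poly m" and "1 \<le> m"
  shows "opB m c f \<in> sym_poly m"
proof (rule sym_poly_if_perm_act)
  have "poly_fract {1..m} (cz c 1 * beta 1 f)"
    using assms(2) by (intro poly_fract_cz_beta sym_poly_poly_fract f) simp
  then show "poly_fract {1..m} (opB m c f)"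
    unfolding opB_def by (rule poly_fract_fold_ddiff) auto
  show "perm_act \<pi> (opB m c f) = opB m c f" if "\<pi> permutes {1..m}" for \<pi>
    using perm_act_opA[OF sym_poly_perm_act[OF f] that, of c]
      opA_eq_opB[OF sym_poly_perm_act[OF f] assms(2)]
    by simp
qed

theorem lemma4p7:
  fixes \<iota> :: "complex \<Rightarrow> 'a::idom" and m :: nat and c :: "'a poly"
  assumes "complex_alg_hom \<iota>" and "m \<ge> 1"
  shows "(\<forall>f\<in>sym_ratfun m. opA m c f = opB m c f)
       \<and> (\<forall>f\<in>sym_poly m. opA m c f \<in> sym_poly m \<and> opB m c f \<in> sym_poly m)"
proof -
  have "opA m c f = opB m c f" if "f \<in> sym_ratfun m \<or> f \<in> sym_poly m" for f
    using that sym_poly_perm_act[of f m] by (intro opA_eq_opB assms(2)) (auto simp: sym_ratfun_def)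
  then show ?thesis
    using opB_in_sym_poly[OF _ assms(2)] by auto
qed

end
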